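(* Let $\beta>0$ and $f\in\mathcal H_B^\beta$, and let $a=a(\beta)>0$ be any constant satisfying $(e^a-1)+a^\beta/(\lfloor\beta\rfloor!)\le1/2$. Then for all $x\in[0,1]$ and $h$ with $x+h\in[0,1]$ and $$|h|\le a\Big(\frac{\min(f(x),1-f(x))}{\|f\|_{\mathcal H_B^\beta}}\Big)^{1/\beta},$$ we have $$|f(x+h)-f(x)|=|(1-f(x))-(1-f(x+h))|\le\tfrac12\min(f(x),1-f(x)),$$ and in particular $$\tfrac14f(x)(1-f(x))\le f(x+h)(1-f(x+h))\le\tfrac94f(x)(1-f(x)).$$
   Context: For $\beta>0$, $\lfloor\beta\rfloor$ is the greatest integer strictly smaller than $\beta$. $\|f\|_{C^\beta([0,1])}=\|f\|_\infty+\|f^{(\lfloor\beta\rfloor)}\|_\infty+\sup_{x\ne y}|f^{(\lfloor\beta\rfloor)}(x)-f^{(\lfloor\beta\rfloor)}(y)|/|x-y|^{\beta-\lfloor\beta\rfloor}$. For a function $g$, $|g|_{\mathcal H^\beta}=\max_{1\le j<\beta}\big(\sup_{x\in[0,1]}|g^{(j)}(x)|^\beta/|g(x)|^{\beta-j}\big)^{1/j}$, with $0/0:=0$ and $|g|_{\mathcal H^\beta}=0$ if $\beta\le1$. $\mathcal H_B^\beta=\{f:[0,1]\to[0,1]:\ \|f\|_{\mathcal H_B^\beta}:=\|f\|_{C^\beta([0,1])}+|f|_{\mathcal H^\beta}+|1-f|_{\mathcal H^\beta}<\infty\}$. *)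

theory Defs
  imports "HOL-Analysis.Analysis"
begin

text \<open>The paper's floor: the greatest integer strictly smaller than beta (beta > 0).\<close>
definition flr :: "real \<Rightarrow> nat" where
  "flr \<beta> = nat (\<lceil>\<beta>\<rceil> - 1)"

text \<open>D 0 = f on [0,1] and D (j+1) is the derivative (within [0,1]) of D j, for j < m.
  Derivatives within [0,1] are unique on [0,1], so D is determined by f there.\<close>
definition derivs_on :: "(nat \<Rightarrow> real \<Rightarrow> real) \<Rightarrow> nat \<Rightarrow> (real \<Rightarrow> real) \<Rightarrow> bool" where
  "derivs_on D m f \<longleftrightarrow> (\<forall>x\<in>{0..1}. D 0 x = f x) \<and>
     (\<forall>j<m. \<forall>x\<in>{0..1}. (D j has_real_derivative D (Suc j) x) (at x within {0..1}))"

definition sup_norm :: "(real \<Rightarrow> real) \<Rightarrow> ereal" where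
  "sup_norm g = (SUP x\<in>{0..1}. ereal \<bar>g x\<bar>)"

definition C_norm :: "real \<Rightarrow> (nat \<Rightarrow> real \<Rightarrow> real) \<Rightarrow> ereal" where
  "C_norm \<beta> D = sup_norm (D 0) + sup_norm (D (flr \<beta>)) +
     (SUP p\<in>{(x,y). x\<in>{0..1} \<and> y\<in>{0..1} \<and> x \<noteq> y}.
        ereal (\<bar>D (flr \<beta>) (fst p) - D (flr \<beta>) (snd p)\<bar> / \<bar>fst p - snd p\<bar> powr (\<beta> - real (flr \<beta>))))"

definition H_ratio :: "real \<Rightarrow> real \<Rightarrow> real \<Rightarrow> real \<Rightarrow> ereal" where
  "H_ratio \<beta> j dj g0 = (if g0 = 0 then (if dj = 0 then 0 else \<infinity>)
       else ereal (\<bar>dj\<bar> powr \<beta> / \<bar>g0\<bar> powr (\<beta> - j)))"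

definition eroot :: "ereal \<Rightarrow> real \<Rightarrow> ereal" where
  "eroot e r = (if e = \<infinity> then \<infinity> else ereal (real_of_ereal e powr r))"

text \<open>|g|_{H^beta}, where G j is the j-th derivative of g; equals 0 when beta \<le> 1 (empty max).\<close>
definition H_semi :: "real \<Rightarrow> (nat \<Rightarrow> real \<Rightarrow> real) \<Rightarrow> ereal" where
  "H_semi \<beta> G = Sup ({0} \<union> (\<lambda>j. eroot (SUP x\<in>{0..1}. H_ratio \<beta> (real j) (G j x) (G 0 x)) (1 / real j))
        ` {j::nat. 1 \<le> j \<and> real j < \<beta>})"

definition one_minus :: "(nat \<Rightarrow> real \<Rightarrow> real) \<Rightarrow> nat \<Rightarrow> real \<Rightarrow> real" where
  "one_minus D j x = (if j = 0 then 1 - D 0 x else - D j x)"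

definition HB_norm :: "real \<Rightarrow> (nat \<Rightarrow> real \<Rightarrow> real) \<Rightarrow> ereal" where
  "HB_norm \<beta> D = C_norm \<beta> D + H_semi \<beta> D + H_semi \<beta> (one_minus D)"

definition in_HB :: "real \<Rightarrow> (real \<Rightarrow> real) \<Rightarrow> (nat \<Rightarrow> real \<Rightarrow> real) \<Rightarrow> bool" where
  "in_HB \<beta> f D \<longleftrightarrow> derivs_on D (flr \<beta>) f \<and> (\<forall>x\<in>{0..1}. f x \<in> {0..1}) \<and> HB_norm \<beta> D < \<infinity>"

end

theory Submission
  imports Defs
begin

text \<open>Write \<open>m = min (f x) (1 - f x)\<close>, \<open>N\<close> for the norm of \<open>f\<close> and \<open>k = \<lfloor>\<beta>\<rfloor>\<close>, and expand
  \<open>f (x + h)\<close> by Taylor's formula of order \<open>k\<close> at \<open>x\<close>. The seminorm of whichever of \<open>f\<close>,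
  \<open>1 - f\<close> is smaller at \<open>x\<close> bounds the derivatives there, \<open>|f\<^sup>(\<^sup>i\<^sup>)(x)|^\<beta> \<le> N^i m^(\<beta> - i)\<close>,
  so under the constraint on \<open>h\<close> the \<open>i\<close>-th Taylor term is at most \<open>m a^i / i!\<close>, while the
  Hoelder continuity of \<open>f\<^sup>(\<^sup>k\<^sup>)\<close> bounds the remainder by \<open>m a^\<beta> / k!\<close>. Hence
  \<open>|f (x + h) - f x| \<le> m ((e^a - 1) + a^\<beta> / k!) \<le> m / 2\<close>: both \<open>f\<close> and \<open>1 - f\<close> change by at most
  half their value at \<open>x\<close>, which gives the bounds on \<open>f (1 - f)\<close>.\<close>

lemma taylor_remainder_bound_forward:
  fixes Df :: "nat \<Rightarrow> real \<Rightarrow> real"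
  assumes k: "k > 0" and ab: "a \<le> b"
    and der: "\<And>m t. m < k \<Longrightarrow> a \<le> t \<Longrightarrow> t \<le> b \<Longrightarrow>
        (Df m has_real_derivative Df (Suc m) t) (at t within {a..b})"
    and C: "\<And>t. a \<le> t \<Longrightarrow> t \<le> b \<Longrightarrow> \<bar>Df k t - Df k a\<bar> \<le> C"
  shows "\<bar>Df 0 b - (\<Sum>i\<le>k. (b-a)^i / fact i * Df i a)\<bar> \<le> C * (b-a)^k / fact k"
proof -
  define g where "g t = (b - t) ^ (k - 1) / fact (k - 1)" for t :: real
  have taylor_integral: "((\<lambda>t. g t * Df k t) has_integral
      Df 0 b - (\<Sum>i<k. ((b-a) ^ i / fact i) * Df i a)) {a..b}"
    using Taylor_has_integral[of k Df "Df 0" a b] k ab der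
    by (auto simp: g_def has_real_derivative_iff_has_vector_derivative)
  have kernel_integral: "(g has_integral (b-a)^k / fact k) {a..b}"
  proof -
    obtain n where n: "k = Suc n" using k by (cases k) auto
    have "((\<lambda>s. -((b - s)^k / fact k)) has_real_derivative g t) (at t within {a..b})" for t
      by (rule derivative_eq_intros refl | simp add: g_def n)+
    then show ?thesis
      using fundamental_theorem_of_calculus[OF ab, of "\<lambda>s. -((b - s)^k / fact k)" g] k
      by (auto simp: has_real_derivative_iff_has_vector_derivative zero_power)
  qed
  have g_nonneg: "t \<in> {a..b} \<Longrightarrow> 0 \<le> g t" for t by (auto simp: g_def)
  have centered_integral: "((\<lambda>t. g t * (Df k t - Df k a)) has_integral
      (Df 0 b - (\<Sum>i<k. ((b-a) ^ i / fact i) * Df i a)) - (b-a)^k / fact k * Df k a) {a..b}"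
    using has_integral_diff[OF taylor_integral has_integral_mult_left[OF kernel_integral, of "Df k a"]]
    by (simp add: algebra_simps)
  have bound_integral: "((\<lambda>t. g t * C) has_integral (b-a)^k / fact k * C) {a..b}"
    using has_integral_mult_left[OF kernel_integral] .
  have upper: "g t * (Df k t - Df k a) \<le> g t * C" if "t \<in> {a..b}" for t
    using g_nonneg[OF that] C[of t] that by (intro mult_left_mono) auto
  have lower: "- (g t * C) \<le> g t * (Df k t - Df k a)" if "t \<in> {a..b}" for t
  proof -
    have "g t * (- C) \<le> g t * (Df k t - Df k a)"
      using g_nonneg[OF that] C[of t] that by (intro mult_left_mono) auto
    then show ?thesis by simp
  qed
  have split_top: "(\<Sum>i\<le>k. (b-a)^i / fact i * Df i a)
      = (\<Sum>i<k. (b-a)^i / fact i * Df i a) + (b-a)^k / fact k * Df k a"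
    by (simp add: lessThan_Suc_atMost[symmetric])
  show ?thesis
    using has_integral_le[OF centered_integral bound_integral upper]
      has_integral_le[OF has_integral_neg[OF bound_integral] centered_integral lower]
    unfolding split_top by (simp add: abs_le_iff algebra_simps)
qed

lemma taylor_remainder_bound:
  fixes D :: "nat \<Rightarrow> real \<Rightarrow> real"
  assumes k: "k > 0"
    and der: "\<And>m t. m < k \<Longrightarrow> t \<in> {l..u} \<Longrightarrow>
        (D m has_real_derivative D (Suc m) t) (at t within {l..u})"
    and x: "x \<in> {l..u}" and y: "y \<in> {l..u}"
    and C: "\<And>t. t \<in> {l..u} \<Longrightarrow> \<bar>t - x\<bar> \<le> \<bar>y - x\<bar> \<Longrightarrow> \<bar>D k t - D k x\<bar> \<le> C"
  shows "\<bar>D 0 y - (\<Sum>i\<le>k. (y-x)^i / fact i * D i x)\<bar> \<le> C * \<bar>y-x\<bar>^k / fact k"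
proof (cases "x \<le> y")
  case True
  have "\<bar>D 0 y - (\<Sum>i\<le>k. (y-x)^i / fact i * D i x)\<bar> \<le> C * (y-x)^k / fact k"
  proof (rule taylor_remainder_bound_forward[OF k True])
    fix m t assume "m < k" "x \<le> t" "t \<le> y"
    then show "(D m has_real_derivative D (Suc m) t) (at t within {x..y})"
      using der[of m t] x y by (auto intro: has_field_derivative_subset)
  next
    fix t assume "x \<le> t" "t \<le> y"
    then show "\<bar>D k t - D k x\<bar> \<le> C" using C[of t] x y by auto
  qed
  then show ?thesis using True by simp
next
  case False
  define Df where "Df m t = (-1)^m * D m (x + y - t)" for m t
  have "\<bar>Df 0 x - (\<Sum>i\<le>k. (x-y)^i / fact i * Df i y)\<bar> \<le> C * (x-y)^k / fact k"
  proof (rule taylor_remainder_bound_forward[OF k])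
    show "y \<le> x" using False by simp
  next
    fix m t assume m: "m < k" and t: "y \<le> t" "t \<le> x"
    have reflect: "(\<lambda>t. x + y - t) ` {y..x} \<subseteq> {l..u}" using x y by auto
    have "(D m has_real_derivative D (Suc m) (x + y - t))
        (at ((\<lambda>t. x + y - t) t) within ((\<lambda>t. x + y - t) ` {y..x}))"
      using has_field_derivative_subset[OF der[OF m] reflect] t x y by simp
    moreover have "((\<lambda>t. x + y - t) has_real_derivative -1) (at t within {y..x})"
      by (auto intro!: derivative_eq_intros)
    ultimately have "((\<lambda>t. D m (x + y - t)) has_real_derivative - D (Suc m) (x + y - t))
        (at t within {y..x})"
      using DERIV_image_chain by (fastforce simp: o_def)
    then show "(Df m has_real_derivative Df (Suc m) t) (at t within {y..x})"
      unfolding Df_def[abs_def] by (auto intro!: derivative_eq_intros)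
  next
    fix t assume t: "y \<le> t" "t \<le> x"
    have "\<bar>D k (x + y - t) - D k x\<bar> \<le> C" using C[of "x + y - t"] t x y by auto
    then show "\<bar>Df k t - Df k y\<bar> \<le> C"
      by (simp add: Df_def abs_mult power_abs right_diff_distrib[symmetric])
  qed
  moreover have "Df 0 x = D 0 y" by (simp add: Df_def)
  moreover have "(x-y)^i / fact i * Df i y = (y-x)^i / fact i * D i x" for i
  proof -
    have "(x-y)^i * (-1)^i = (y-x)^i" by (simp add: power_mult_distrib[symmetric])
    then show ?thesis by (simp add: Df_def)
  qed
  ultimately show ?thesis using False by simp
qed

lemma taylor_hoelder_remainder_bound:
  fixes D :: "nat \<Rightarrow> real \<Rightarrow> real"
  assumes der: "\<And>m t. m < k \<Longrightarrow> t \<in> {l..u} \<Longrightarrow>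
        (D m has_real_derivative D (Suc m) t) (at t within {l..u})"
    and hoelder: "\<And>s t. s \<in> {l..u} \<Longrightarrow> t \<in> {l..u} \<Longrightarrow> \<bar>D k s - D k t\<bar> \<le> L * \<bar>s - t\<bar> powr \<gamma>"
    and L: "0 \<le> L" and \<gamma>: "0 < \<gamma>" and x: "x \<in> {l..u}" and y: "y \<in> {l..u}"
  shows "\<bar>D 0 y - (\<Sum>i\<le>k. (y-x)^i / fact i * D i x)\<bar> \<le> L * \<bar>y - x\<bar> powr (k + \<gamma>) / fact k"
proof (cases "k = 0")
  case True
  then show ?thesis using hoelder[OF y x] by simp
next
  case False
  have "\<bar>D 0 y - (\<Sum>i\<le>k. (y-x)^i / fact i * D i x)\<bar> \<le> (L * \<bar>y - x\<bar> powr \<gamma>) * \<bar>y-x\<bar>^k / fact k"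
  proof (rule taylor_remainder_bound[where D = D, OF _ der x y])
    show "k > 0" using False by simp
  next
    fix t assume t: "t \<in> {l..u}" "\<bar>t - x\<bar> \<le> \<bar>y - x\<bar>"
    have "\<bar>D k t - D k x\<bar> \<le> L * \<bar>t - x\<bar> powr \<gamma>" using hoelder[OF t(1) x] .
    also have "\<dots> \<le> L * \<bar>y - x\<bar> powr \<gamma>"
      using t(2) \<gamma> L by (intro mult_left_mono powr_mono2) auto
    finally show "\<bar>D k t - D k x\<bar> \<le> L * \<bar>y - x\<bar> powr \<gamma>" .
  qed
  also have "(L * \<bar>y - x\<bar> powr \<gamma>) * \<bar>y-x\<bar>^k = L * \<bar>y - x\<bar> powr (k + \<gamma>)"
  proof (cases "y = x")
    case True
    then show ?thesis using False by simp
  next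
    case False
    then show ?thesis by (simp add: powr_realpow[symmetric] powr_add mult_ac)
  qed
  finally show ?thesis .
qed

lemma exp_partial_sum_le:
  fixes a :: real
  assumes "0 \<le> a"
  shows "(\<Sum>i\<le>k. a^i / fact i) \<le> exp a"
proof -
  have s: "(\<lambda>n. a^n / fact n) sums exp a"
    using exp_converges[of a] by (simp add: divide_inverse mult.commute)
  have "(\<Sum>i\<le>k. a^i / fact i) \<le> suminf (\<lambda>n. a^n / fact n)"
    by (rule sum_le_suminf[OF sums_summable[OF s]]) (use assms in auto)
  then show ?thesis using sums_unique[OF s] by simp
qed

lemma taylor_polynomial_increment_bound:
  fixes a m h :: real and D :: "nat \<Rightarrow> real \<Rightarrow> real"
  assumes a: "a \<ge> 0" and m: "m \<ge> 0" and terms: "\<And>i. i \<in> {1..k} \<Longrightarrow> \<bar>D i x\<bar> * \<bar>h\<bar>^i \<le> m * a^i"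
  shows "\<bar>\<Sum>i\<in>{1..k}. h^i / fact i * D i x\<bar> \<le> m * (exp a - 1)"
proof -
  have "\<bar>\<Sum>i\<in>{1..k}. h^i / fact i * D i x\<bar> \<le> (\<Sum>i\<in>{1..k}. \<bar>h^i / fact i * D i x\<bar>)"
    by (rule sum_abs)
  also have "\<dots> \<le> (\<Sum>i\<in>{1..k}. m * a^i / fact i)"
    using terms by (intro sum_mono) (simp add: abs_mult power_abs divide_right_mono mult.commute)
  also have "\<dots> = m * ((\<Sum>i\<le>k. a^i / fact i) - 1)"
    by (simp add: sum_distrib_left atMost_atLeast0 sum.atLeast_Suc_atMost)
  also have "\<dots> \<le> m * (exp a - 1)"
    using m exp_partial_sum_le[OF a, of k] by (intro mult_left_mono) auto
  finally show ?thesis .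
qed

lemma scaled_increment_powr_bound:
  fixes \<beta> N m a h :: real
  assumes \<beta>: "\<beta> > 0" and N: "N > 0" and m: "m > 0" and a: "a \<ge> 0"
    and h: "\<bar>h\<bar> \<le> a * (m/N) powr (1/\<beta>)"
  shows "N * \<bar>h\<bar> powr \<beta> \<le> m * a powr \<beta>"
proof -
  have "\<bar>h\<bar> powr \<beta> \<le> (a * (m/N) powr (1/\<beta>)) powr \<beta>"
    using \<beta> h by (intro powr_mono2) auto
  also have "\<dots> = a powr \<beta> * (m / N)"
    using \<beta> m N a by (simp add: powr_mult powr_powr)
  finally have "N * \<bar>h\<bar> powr \<beta> \<le> N * (a powr \<beta> * (m / N))"
    using N by (intro mult_left_mono) auto
  then show ?thesis using N by (simp add: mult.commute)
qed

lemma scaled_derivative_term_bound: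
  fixes \<beta> N m d a h :: real
  assumes \<beta>: "\<beta> > 0" and N: "N > 0" and m: "m > 0" and d: "d \<ge> 0" and a: "a \<ge> 0"
    and d_powr: "d powr \<beta> \<le> N powr j * m powr (\<beta> - j)"
    and h: "\<bar>h\<bar> \<le> a * (m/N) powr (1/\<beta>)"
  shows "d * \<bar>h\<bar>^j \<le> m * a^j"
proof -
  define q where "q = (m/N) powr (1/\<beta>)"
  have q: "q > 0" using m N by (simp add: q_def)
  have "d = (d powr \<beta>) powr (1/\<beta>)" using \<beta> d by (simp add: powr_powr)
  also have "\<dots> \<le> (N powr j * m powr (\<beta> - j)) powr (1/\<beta>)"
    using \<beta> d_powr by (intro powr_mono2) auto
  also have "\<dots> = N powr (j/\<beta>) * m powr ((\<beta> - j)/\<beta>)"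
    by (simp add: powr_mult powr_powr)
  finally have d_le: "d \<le> N powr (j/\<beta>) * m powr ((\<beta> - j)/\<beta>)" .
  have qj: "q^j = m powr (j/\<beta>) / N powr (j/\<beta>)"
    using q powr_realpow[OF q, of j, symmetric] by (simp add: q_def powr_powr powr_divide)
  have "\<bar>h\<bar>^j \<le> (a*q)^j" using h by (intro power_mono) (auto simp: q_def)
  then have "d * \<bar>h\<bar>^j \<le> (N powr (j/\<beta>) * m powr ((\<beta> - j)/\<beta>)) * (a*q)^j"
    using d_le d by (intro mult_mono) auto
  also have "\<dots> = m powr ((\<beta> - j)/\<beta> + j/\<beta>) * a^j"
    using N by (simp add: power_mult_distrib qj powr_add)
  also have "(\<beta> - j)/\<beta> + j/\<beta> = 1" using \<beta> by (simp add: field_simps)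
  finally show ?thesis using m by simp
qed

lemma mult_one_minus_bounds:
  fixes u v :: real
  assumes "0 \<le> u" "u \<le> 1" "\<bar>v - u\<bar> \<le> 1/2 * min u (1 - u)"
  shows "1/4 * u * (1 - u) \<le> v * (1 - v)" "v * (1 - v) \<le> 9/4 * u * (1 - u)"
proof -
  have "\<bar>v - u\<bar> \<le> u/2" "\<bar>v - u\<bar> \<le> (1 - u)/2" using assms(3) by auto
  then have bounds: "u/2 \<le> v" "v \<le> 3/2 * u" "(1 - u)/2 \<le> 1 - v" "1 - v \<le> 3/2 * (1 - u)"
    unfolding abs_le_iff by (simp_all add: field_simps)
  have "(u/2) * ((1 - u)/2) \<le> v * (1 - v)"
    using bounds assms(1,2) by (intro mult_mono) auto
  then show "1/4 * u * (1 - u) \<le> v * (1 - v)" by (simp add: algebra_simps)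
  have "v * (1 - v) \<le> (3/2 * u) * (3/2 * (1 - u))"
    using bounds assms(1,2) by (intro mult_mono) auto
  then show "v * (1 - v) \<le> 9/4 * u * (1 - u)" by (simp add: algebra_simps)
qed

lemma real_flr_less:
  assumes "\<beta> > 0"
  shows "real (flr \<beta>) < \<beta>"
proof -
  have "1 \<le> \<lceil>\<beta>\<rceil>" using assms by simp
  then have "real (flr \<beta>) = of_int \<lceil>\<beta>\<rceil> - 1" by (simp add: flr_def)
  then show ?thesis using ceiling_correct[of \<beta>] by simp
qed

lemma sup_norm_nonneg: "0 \<le> sup_norm g"
  unfolding sup_norm_def by (rule order_trans[OF _ SUP_upper[of 0]]) auto

lemma H_semi_nonneg: "0 \<le> H_semi \<beta> G"
  unfolding H_semi_def by (rule Sup_upper) auto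

lemma C_norm_nonneg: "0 \<le> C_norm \<beta> D"
proof -
  have "0 \<le> (SUP p\<in>{(x,y). x\<in>{0..1::real} \<and> y\<in>{0..1} \<and> x \<noteq> y}.
        ereal (\<bar>D (flr \<beta>) (fst p) - D (flr \<beta>) (snd p)\<bar> / \<bar>fst p - snd p\<bar> powr (\<beta> - real (flr \<beta>))))"
    by (rule order_trans[OF _ SUP_upper[of "(0,1)"]]) auto
  then show ?thesis
    unfolding C_norm_def by (simp add: add_nonneg_nonneg sup_norm_nonneg)
qed

lemma HB_norm_components_le:
  shows "C_norm \<beta> D \<le> HB_norm \<beta> D" "H_semi \<beta> D \<le> HB_norm \<beta> D"
    and "H_semi \<beta> (one_minus D) \<le> HB_norm \<beta> D"
  using C_norm_nonneg[of \<beta> D] H_semi_nonneg[of \<beta> D] H_semi_nonneg[of \<beta> "one_minus D"]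
  unfolding HB_norm_def by (simp_all add: add_increasing add_increasing2)

lemma HB_norm_eq_ereal:
  assumes "in_HB \<beta> f D"
  shows "HB_norm \<beta> D = ereal (real_of_ereal (HB_norm \<beta> D))" "0 \<le> real_of_ereal (HB_norm \<beta> D)"
proof -
  have "0 \<le> HB_norm \<beta> D"
    using C_norm_nonneg HB_norm_components_le(1) by (rule order_trans)
  moreover have "HB_norm \<beta> D < \<infinity>" using assms by (simp add: in_HB_def)
  ultimately show "HB_norm \<beta> D = ereal (real_of_ereal (HB_norm \<beta> D))" "0 \<le> real_of_ereal (HB_norm \<beta> D)"
    by (cases "HB_norm \<beta> D"; simp)+
qed

lemma C_norm_hoelder_bound:
  assumes C: "C_norm \<beta> D \<le> ereal N" and s: "s \<in> {0..1}" and t: "t \<in> {0..1}"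
  shows "\<bar>D (flr \<beta>) s - D (flr \<beta>) t\<bar> \<le> N * \<bar>s - t\<bar> powr (\<beta> - flr \<beta>)"
proof (cases "s = t")
  case False
  define k where "k = flr \<beta>"
  define q where "q = \<bar>D k s - D k t\<bar> / \<bar>s - t\<bar> powr (\<beta> - real k)"
  have "ereal q \<le> (SUP p\<in>{(x,y). x\<in>{0..1::real} \<and> y\<in>{0..1} \<and> x \<noteq> y}.
        ereal (\<bar>D k (fst p) - D k (snd p)\<bar> / \<bar>fst p - snd p\<bar> powr (\<beta> - real k)))"
    unfolding q_def using s t False by (intro SUP_upper2[of "(s, t)"]) auto
  also have "\<dots> \<le> C_norm \<beta> D"
    unfolding C_norm_def k_def
    by (simp add: add_increasing sup_norm_nonneg)
  also note C
  finally have "q \<le> N" by simp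
  moreover have "\<bar>s - t\<bar> powr (\<beta> - real k) > 0" using False by simp
  ultimately show ?thesis by (simp add: q_def k_def divide_le_eq mult.commute)
qed simp

lemma H_semi_ratio_bound:
  assumes "H_semi \<beta> G \<le> ereal N" "1 \<le> j" "real j < \<beta>" "x \<in> {0..1}" "G 0 x \<noteq> 0"
  shows "\<bar>G j x\<bar> powr \<beta> / \<bar>G 0 x\<bar> powr (\<beta> - j) \<le> N powr j"
proof -
  define e where "e = (SUP x\<in>{0..1}. H_ratio \<beta> (real j) (G j x) (G 0 x))"
  have "eroot e (1 / real j) \<le> H_semi \<beta> G"
    unfolding H_semi_def e_def using assms(2,3) by (intro Sup_upper) auto
  with assms(1) have root_le: "eroot e (1 / real j) \<le> ereal N" by simp
  have "H_ratio \<beta> (real j) (G j x) (G 0 x) \<le> e"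
    unfolding e_def using assms(4) by (rule SUP_upper)
  then have ratio_le: "ereal (\<bar>G j x\<bar> powr \<beta> / \<bar>G 0 x\<bar> powr (\<beta> - j)) \<le> e"
    using assms(5) by (simp add: H_ratio_def)
  have "e \<noteq> \<infinity>" using root_le by (auto simp: eroot_def)
  moreover have "0 \<le> e" by (rule order_trans[OF _ ratio_le]) simp
  ultimately obtain s where s: "e = ereal s" "0 \<le> s" by (cases e) auto
  have "s = (s powr (1 / real j)) powr (real j)"
    using s assms(2) by (simp add: powr_powr)
  also have "\<dots> \<le> N powr j"
    using root_le s by (intro powr_mono2) (auto simp: eroot_def)
  finally show ?thesis using ratio_le s by simp
qed

lemma derivative_powr_bound:
  assumes H: "H_semi \<beta> D \<le> ereal N" "H_semi \<beta> (one_minus D) \<le> ereal N"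
    and j: "1 \<le> j" "real j < \<beta>" and x: "x \<in> {0..1}"
    and m: "0 < min (D 0 x) (1 - D 0 x)"
  shows "\<bar>D j x\<bar> powr \<beta> \<le> N powr j * min (D 0 x) (1 - D 0 x) powr (\<beta> - j)"
proof (cases "D 0 x \<le> 1 - D 0 x")
  case True
  then have "D 0 x > 0" using m by simp
  with H_semi_ratio_bound[OF H(1) j x] True show ?thesis
    by (simp add: divide_le_eq min_def)
next
  case False
  then have "one_minus D 0 x > 0" using m by (simp add: one_minus_def)
  with H_semi_ratio_bound[OF H(2) j x] False j(1) show ?thesis
    by (simp add: divide_le_eq min_def one_minus_def)
qed

lemma HB_increment_bound:
  fixes \<beta> a x h N :: real and f :: "real \<Rightarrow> real" and D :: "nat \<Rightarrow> real \<Rightarrow> real"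
  assumes \<beta>: "\<beta> > 0" and f: "in_HB \<beta> f D" and HB: "HB_norm \<beta> D = ereal N" and N: "N > 0"
    and m: "0 < min (f x) (1 - f x)" and a: "a \<ge> 0"
    and x: "x \<in> {0..1}" and y: "x + h \<in> {0..1}"
    and h: "\<bar>h\<bar> \<le> a * (min (f x) (1 - f x) / N) powr (1 / \<beta>)"
  shows "\<bar>f (x + h) - f x\<bar> \<le> min (f x) (1 - f x) * ((exp a - 1) + a powr \<beta> / fact (flr \<beta>))"
proof -
  define k where "k = flr \<beta>"
  define m where "m = min (f x) (1 - f x)"
  have D0: "\<And>t. t \<in> {0..1} \<Longrightarrow> D 0 t = f t"
    and der: "\<And>j t. j < k \<Longrightarrow> t \<in> {0..1} \<Longrightarrow>
        (D j has_real_derivative D (Suc j) t) (at t within {0..1})"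
    using f by (auto simp: in_HB_def derivs_on_def k_def)
  have k: "real k < \<beta>" using real_flr_less[OF \<beta>] by (simp add: k_def)
  note m = m[folded m_def] and h = h[folded m_def]
  have remainder: "\<bar>D 0 (x + h) - (\<Sum>i\<le>k. h^i / fact i * D i x)\<bar> \<le> m * a powr \<beta> / fact k"
  proof -
    have "C_norm \<beta> D \<le> ereal N" using HB_norm_components_le(1) HB by metis
    then have hoelder: "\<bar>D k s - D k t\<bar> \<le> N * \<bar>s - t\<bar> powr (\<beta> - k)"
      if "s \<in> {0..1}" "t \<in> {0..1}" for s t
      using C_norm_hoelder_bound that by (simp add: k_def)
    have "\<bar>D 0 (x + h) - (\<Sum>i\<le>k. h^i / fact i * D i x)\<bar> \<le> N * \<bar>h\<bar> powr (k + (\<beta> - k)) / fact k"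
      using taylor_hoelder_remainder_bound[OF der hoelder _ _ x y] N k by simp
    also have "\<dots> \<le> m * a powr \<beta> / fact k"
      using scaled_increment_powr_bound[OF \<beta> N m a h] by (simp add: divide_right_mono)
    finally show ?thesis .
  qed
  have H: "H_semi \<beta> D \<le> ereal N" "H_semi \<beta> (one_minus D) \<le> ereal N"
    using HB_norm_components_le(2,3) HB by metis+
  have polynomial: "\<bar>\<Sum>i\<in>{1..k}. h^i / fact i * D i x\<bar> \<le> m * (exp a - 1)"
  proof (rule taylor_polynomial_increment_bound)
    fix i assume "i \<in> {1..k}"
    then have "1 \<le> i" "real i < \<beta>" using k by auto
    from derivative_powr_bound[OF H this x]
    have "\<bar>D i x\<bar> powr \<beta> \<le> N powr i * m powr (\<beta> - i)"
      using D0[OF x] m by (simp add: m_def)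
    then show "\<bar>D i x\<bar> * \<bar>h\<bar>^i \<le> m * a^i"
      using scaled_derivative_term_bound[OF \<beta> N m _ a _ h] by simp
  qed (use a m in auto)
  have "(\<Sum>i\<le>k. h^i / fact i * D i x) = f x + (\<Sum>i\<in>{1..k}. h^i / fact i * D i x)"
    using D0[OF x] by (simp add: atMost_atLeast0 sum.atLeast_Suc_atMost)
  then have "\<bar>f (x + h) - f x\<bar> \<le> m * a powr \<beta> / fact k + m * (exp a - 1)"
    using remainder polynomial D0[OF y] by linarith
  then show ?thesis by (simp add: m_def k_def algebra_simps)
qed

lemma HB_increment_le_half_min:
  fixes \<beta> a x h :: real and f :: "real \<Rightarrow> real" and D :: "nat \<Rightarrow> real \<Rightarrow> real"
  assumes \<beta>: "\<beta> > 0" and f: "in_HB \<beta> f D" and a: "a > 0"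
    and a_small: "(exp a - 1) + a powr \<beta> / fact (flr \<beta>) \<le> 1/2"
    and x: "x \<in> {0..1}" and y: "x + h \<in> {0..1}"
    and h: "\<bar>h\<bar> \<le> a * (min (f x) (1 - f x) / real_of_ereal (HB_norm \<beta> D)) powr (1 / \<beta>)"
  shows "\<bar>f (x + h) - f x\<bar> \<le> 1/2 * min (f x) (1 - f x)"
proof -
  define N where "N = real_of_ereal (HB_norm \<beta> D)"
  define m where "m = min (f x) (1 - f x)"
  have HB: "HB_norm \<beta> D = ereal N" "0 \<le> N" using HB_norm_eq_ereal[OF f] by (simp_all add: N_def)
  have m: "0 \<le> m" using f x by (auto simp: m_def in_HB_def)
  show ?thesis
  proof (cases "m > 0 \<and> N > 0")
    case False
    \<comment> \<open>\<open>h = 0\<close>: also when \<open>N = 0\<close>, since then \<open>m / N = 0\<close> in HOL\<close>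
    then have "m / N = 0" using m HB(2) by auto
    then have "h = 0" using h by (metis N_def m_def abs_le_zero_iff mult_zero_right powr_0)
    then show ?thesis using m by (simp add: m_def)
  next
    case True
    then have "\<bar>f (x + h) - f x\<bar> \<le> m * ((exp a - 1) + a powr \<beta> / fact (flr \<beta>))"
      using HB_increment_bound[OF \<beta> f HB(1) _ _ _ x y] a h by (simp add: m_def N_def)
    also have "\<dots> \<le> m * (1/2)"
      using a_small m by (intro mult_left_mono) auto
    finally show ?thesis by (simp add: m_def)
  qed
qed

theorem lemmaB4:
  fixes \<beta> a x h :: real and f :: "real \<Rightarrow> real" and D :: "nat \<Rightarrow> real \<Rightarrow> real"
  assumes "\<beta> > 0"
    and "in_HB \<beta> f D"
    and "a > 0"
    and "(exp a - 1) + a powr \<beta> / fact (flr \<beta>) \<le> 1/2"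
    and "x \<in> {0..1}" and "x + h \<in> {0..1}"
    and "\<bar>h\<bar> \<le> a * (min (f x) (1 - f x) / real_of_ereal (HB_norm \<beta> D)) powr (1 / \<beta>)"
  shows "\<bar>f (x + h) - f x\<bar> = \<bar>(1 - f x) - (1 - f (x + h))\<bar>
    \<and> \<bar>f (x + h) - f x\<bar> \<le> (1/2) * min (f x) (1 - f x)
    \<and> (1/4) * f x * (1 - f x) \<le> f (x + h) * (1 - f (x + h))
    \<and> f (x + h) * (1 - f (x + h)) \<le> (9/4) * f x * (1 - f x)"
proof -
  have increment: "\<bar>f (x + h) - f x\<bar> \<le> 1/2 * min (f x) (1 - f x)"
    by (rule HB_increment_le_half_min[OF assms])
  have "0 \<le> f x" "f x \<le> 1" using assms(2,5) by (auto simp: in_HB_def)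
  from mult_one_minus_bounds[OF this increment] increment show ?thesis by simp
qed

end
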